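(* Let $h\in[n+1]^d$ with $\mathcal Y^h\ne\emptyset$. Then for every $t\in\mathbb{R}^d_+$, \[ \hat\Phi^{\mathrm{lwc}}(t;h)=\max_{1\le j\le d}\Big\{\frac{t_j}{r_j(h_j)}-\min\Big\{\frac{\hat\mu_j(0)}{\hat\sigma_j(0)},\ \lim_{z_j\uparrow\omega_j(\hat Q^{\mathrm{gwc}}_{1-\alpha})}\frac{\hat\mu_j(z_j)}{\hat\sigma_j(z_j)}\Big\}\Big\}, \] where $r_j(h_j)=\hat\sigma_j$ if $E^{(h_j-1)}_j\le\hat\mu_j<U^{h_j}_j$, and $r_j(h_j)=\min\{\hat\sigma_j(E^{(h_j-1)}_j),\hat\sigma_j(U^{h_j}_j)\}$ otherwise (the limit is $z_j\to\infty$ when $\omega_j(\hat Q^{\mathrm{gwc}}_{1-\alpha})=+\infty$).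
   Context: Setting: $n\ge2$, $d\ge1$, $\alpha\in(0,1)$. Calibration residuals $E^1,\dots,E^n\in\mathbb{R}^d_+$ with, for each $j$, pairwise distinct coordinates $E^1_j,\dots,E^n_j$; test input $X^{n+1}\in\mathcal X$ and a residual function $E:\mathcal X\times\mathbb{R}^d\to\mathbb{R}^d$. $\hat Q_{1-\alpha}(x_1,\dots,x_n)$: the $\lceil(1-\alpha)(n+1)\rceil$-th smallest value of $\{x_1,\dots,x_n,+\infty\}$. $\hat\mu_j=\frac1n\sum_{i=1}^nE^i_j$, $\hat\sigma_j=\sqrt{\frac1n\sum_{i=1}^n(E^i_j-\hat\mu_j)^2}$; for $z\ge0$, $\hat\mu_j(z)=\frac{\sum_{i=1}^nE^i_j+z}{n+1}$, $\hat\sigma_j(z)=\sqrt{\frac{\sum_{i=1}^n(E^i_j-\hat\mu_j(z))^2+(z-\hat\mu_j(z))^2}{n}}$. Link functions: $\omega_j(c)=0$ if $c\le-\frac n{\sqrt{n+1}}$; $\max\{0,\hat\mu_j-\hat\sigma_j|c|\sqrt{\tfrac{(n+1)^2}{n^2-(n+1)c^2}}\}$ if $-\frac n{\sqrt{n+1}}<c<0$; $\hat\mu_j+\hat\sigma_j|c|\sqrt{\tfrac{(n+1)^2}{n^2-(n+1)c^2}}$ if $0\le c<\frac n{\sqrt{n+1}}$; $+\infty$ if $c\ge\frac n{\sqrt{n+1}}$. GWC: $\hat\Phi^{\mathrm{gwc}}(t)=\max_j\sup_{z_j\ge0}\frac{t_j-\hat\mu_j(z_j)}{\hat\sigma_j(z_j)}$,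 $\hat Q^{\mathrm{gwc}}_{1-\alpha}=\hat Q_{1-\alpha}(\hat\Phi^{\mathrm{gwc}}(E^1),\dots,\hat\Phi^{\mathrm{gwc}}(E^n))$, $\mathcal E^{\mathrm{gwc}}=\prod_{j=1}^d[0,\omega_j(\hat Q^{\mathrm{gwc}}_{1-\alpha})]$ (interpreted as $[0,\infty)$ when $\omega_j=+\infty$). Partition: $E^{(k)}_j$ is the $k$-th smallest of $E^1_j,\dots,E^n_j$ for $k\in[n]$, with $E^{(0)}_j:=0$, $E^{(n+1)}_j:=+\infty$. For $h\in[n+1]^d$: $U^{h_j}_j:=\min\{E^{(h_j)}_j,\omega_j(\hat Q^{\mathrm{gwc}}_{1-\alpha})\}$, $R^h:=\prod_{j=1}^d[E^{(h_j-1)}_j,U^{h_j}_j)$, $\mathcal Y^h:=\{y\in\mathbb{R}^d:E(X^{n+1},y)\in R^h\}$. LWC transformation: $\hat\Phi^{\mathrm{lwc}}(t;h):=\max_{1\le j\le d}\Big\{\sup_{z\in R^h}\frac{t_j}{\hat\sigma_j(z_j)}-\inf_{z\in\mathcal E^{\mathrm{gwc}}}\frac{\hat\mu_j(z_j)}{\hat\sigma_j(z_j)}\Big\}$. *)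

theory Defs
  imports "HOL-Analysis.Analysis"
begin

(* Conventions: calibration residuals are E :: nat => nat => real, E i j = E^i_j,
   with i in {1..n}, j in {1..d}.  Vectors in R^d are functions nat => real,
   only coordinates 1..d are relevant. *)

definition mu_hat :: "(nat \<Rightarrow> nat \<Rightarrow> real) \<Rightarrow> nat \<Rightarrow> nat \<Rightarrow> real" where
  "mu_hat E n j = (\<Sum>i=1..n. E i j) / real n"

definition sigma_hat :: "(nat \<Rightarrow> nat \<Rightarrow> real) \<Rightarrow> nat \<Rightarrow> nat \<Rightarrow> real" where
  "sigma_hat E n j = sqrt ((\<Sum>i=1..n. (E i j - mu_hat E n j)^2) / real n)"

definition mu_z :: "(nat \<Rightarrow> nat \<Rightarrow> real) \<Rightarrow> nat \<Rightarrow> nat \<Rightarrow> real \<Rightarrow> real" where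
  "mu_z E n j z = ((\<Sum>i=1..n. E i j) + z) / (real n + 1)"

definition sigma_z :: "(nat \<Rightarrow> nat \<Rightarrow> real) \<Rightarrow> nat \<Rightarrow> nat \<Rightarrow> real \<Rightarrow> real" where
  "sigma_z E n j z = sqrt (((\<Sum>i=1..n. (E i j - mu_z E n j z)^2) + (z - mu_z E n j z)^2) / real n)"

definition omega :: "(nat \<Rightarrow> nat \<Rightarrow> real) \<Rightarrow> nat \<Rightarrow> nat \<Rightarrow> ereal \<Rightarrow> ereal" where
  "omega E n j c =
     (if c \<le> ereal (- (real n / sqrt (real n + 1))) then 0
      else if c \<ge> ereal (real n / sqrt (real n + 1)) then \<infinity>
      else (let c' = real_of_ereal c;
                k = \<bar>c'\<bar> * sqrt ((real n + 1)^2 / ((real n)^2 - (real n + 1) * c'^2))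
            in if c' < 0 then ereal (max 0 (mu_hat E n j - sigma_hat E n j * k))
               else ereal (mu_hat E n j + sigma_hat E n j * k)))"

definition Qhat :: "real \<Rightarrow> nat \<Rightarrow> (nat \<Rightarrow> ereal) \<Rightarrow> ereal" where
  "Qhat alpha n x = sort (map x [1..<n+1] @ [\<infinity>]) ! (nat \<lceil>(1 - alpha) * (real n + 1)\<rceil> - 1)"

definition Phi_gwc :: "(nat \<Rightarrow> nat \<Rightarrow> real) \<Rightarrow> nat \<Rightarrow> nat \<Rightarrow> (nat \<Rightarrow> real) \<Rightarrow> ereal" where
  "Phi_gwc E n d t = Max ((\<lambda>j. SUP z\<in>{0::real..}. ereal ((t j - mu_z E n j z) / sigma_z E n j z)) ` {1..d})"

definition Q_gwc :: "(nat \<Rightarrow> nat \<Rightarrow> real) \<Rightarrow> nat \<Rightarrow> nat \<Rightarrow> real \<Rightarrow> ereal" where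
  "Q_gwc E n d alpha = Qhat alpha n (\<lambda>i. Phi_gwc E n d (\<lambda>j. E i j))"

definition omegaQ :: "(nat \<Rightarrow> nat \<Rightarrow> real) \<Rightarrow> nat \<Rightarrow> nat \<Rightarrow> real \<Rightarrow> nat \<Rightarrow> ereal" where
  "omegaQ E n d alpha j = omega E n j (Q_gwc E n d alpha)"

definition E_gwc :: "(nat \<Rightarrow> nat \<Rightarrow> real) \<Rightarrow> nat \<Rightarrow> nat \<Rightarrow> real \<Rightarrow> (nat \<Rightarrow> real) set" where
  "E_gwc E n d alpha = {z. \<forall>j\<in>{1..d}. 0 \<le> z j \<and> ereal (z j) \<le> omegaQ E n d alpha j}"

definition Eord :: "(nat \<Rightarrow> nat \<Rightarrow> real) \<Rightarrow> nat \<Rightarrow> nat \<Rightarrow> nat \<Rightarrow> ereal" where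
  "Eord E n j k = (if k = 0 then 0
                   else if k \<le> n then ereal (sort (map (\<lambda>i. E i j) [1..<n+1]) ! (k - 1))
                   else \<infinity>)"

definition Ucell :: "(nat \<Rightarrow> nat \<Rightarrow> real) \<Rightarrow> nat \<Rightarrow> nat \<Rightarrow> real \<Rightarrow> nat \<Rightarrow> nat \<Rightarrow> ereal" where
  "Ucell E n d alpha j k = min (Eord E n j k) (omegaQ E n d alpha j)"

definition Rcell :: "(nat \<Rightarrow> nat \<Rightarrow> real) \<Rightarrow> nat \<Rightarrow> nat \<Rightarrow> real \<Rightarrow> (nat \<Rightarrow> nat) \<Rightarrow> (nat \<Rightarrow> real) set" where
  "Rcell E n d alpha h = {z. \<forall>j\<in>{1..d}. Eord E n j (h j - 1) \<le> ereal (z j) \<and> ereal (z j) < Ucell E n d alpha j (h j)}"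

definition Ycell :: "(nat \<Rightarrow> nat \<Rightarrow> real) \<Rightarrow> nat \<Rightarrow> nat \<Rightarrow> real \<Rightarrow> ('x \<Rightarrow> (nat \<Rightarrow> real) \<Rightarrow> (nat \<Rightarrow> real)) \<Rightarrow> 'x \<Rightarrow> (nat \<Rightarrow> nat) \<Rightarrow> (nat \<Rightarrow> real) set" where
  "Ycell E n d alpha Res X h = {y. (\<forall>j. j \<notin> {1..d} \<longrightarrow> y j = 0) \<and> Res X y \<in> Rcell E n d alpha h}"

definition Phi_lwc :: "(nat \<Rightarrow> nat \<Rightarrow> real) \<Rightarrow> nat \<Rightarrow> nat \<Rightarrow> real \<Rightarrow> (nat \<Rightarrow> real) \<Rightarrow> (nat \<Rightarrow> nat) \<Rightarrow> ereal" where
  "Phi_lwc E n d alpha t h = Max ((\<lambda>j.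
      (SUP z\<in>Rcell E n d alpha h. ereal (t j / sigma_z E n j (z j)))
    - (INF z\<in>E_gwc E n d alpha. ereal (mu_z E n j (z j) / sigma_z E n j (z j)))) ` {1..d})"

definition sigma_ext :: "(nat \<Rightarrow> nat \<Rightarrow> real) \<Rightarrow> nat \<Rightarrow> nat \<Rightarrow> ereal \<Rightarrow> ereal" where
  "sigma_ext E n j u = (if u = \<infinity> then \<infinity> else ereal (sigma_z E n j (real_of_ereal u)))"

definition r_fun :: "(nat \<Rightarrow> nat \<Rightarrow> real) \<Rightarrow> nat \<Rightarrow> nat \<Rightarrow> real \<Rightarrow> nat \<Rightarrow> nat \<Rightarrow> ereal" where
  "r_fun E n d alpha j k =
     (if Eord E n j (k - 1) \<le> ereal (mu_hat E n j) \<and> ereal (mu_hat E n j) < Ucell E n d alpha j k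
      then ereal (sigma_hat E n j)
      else min (sigma_ext E n j (Eord E n j (k - 1))) (sigma_ext E n j (Ucell E n d alpha j k)))"

definition ratio_lim :: "(nat \<Rightarrow> nat \<Rightarrow> real) \<Rightarrow> nat \<Rightarrow> nat \<Rightarrow> real \<Rightarrow> nat \<Rightarrow> real" where
  "ratio_lim E n d alpha j =
     (if omegaQ E n d alpha j = \<infinity>
      then Lim at_top (\<lambda>z. mu_z E n j z / sigma_z E n j z)
      else Lim (at_left (real_of_ereal (omegaQ E n d alpha j))) (\<lambda>z. mu_z E n j z / sigma_z E n j z))"

end

theory Submission
  imports Defs "HOL-Real_Asymp.Real_Asymp"
begin

(* By the parallel-axis identity, sigma_z z ^ 2 = sigma_hat ^ 2 + (z - mu_hat) ^ 2 / (n + 1) in each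
   coordinate, so sigma_z is the Euclidean norm of an affine function of z: it is convex, decreasing
   left of mu_hat and increasing right of it.  The j-th projection of the cell R^h is the interval
   [E^(h_j - 1), U^h_j), so the supremum of t_j / sigma_z over R^h is t_j divided by the least value of
   sigma_z on that interval: sigma_hat if mu_hat lies in it, otherwise the value at the nearer end
   point (only approached, not attained, at the open right end).
   The ratio mu_z / sigma_z has a nonnegative affine numerator and a positive convex denominator,
   hence is quasi-concave on [0, \<infinity>).  Its infimum over the projection [0, omega_j] of E^gwc is
   therefore the smaller of its values at the two end points, the right one being a limit when
   omega_j = \<infinity>. *)

lemma sum_squares_about_point:
  fixes e :: "'a \<Rightarrow> real" and A :: "'a set" and m \<mu> :: real
  defines "\<mu> \<equiv> (\<Sum>i\<in>A. e i) / card A"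
  shows "(\<Sum>i\<in>A. (e i - m)^2) = (\<Sum>i\<in>A. (e i - \<mu>)^2) + card A * (\<mu> - m)^2"
proof -
  have centred: "(\<Sum>i\<in>A. e i - \<mu>) = 0"
    by (cases "card A = 0") (auto simp: sum_subtractf \<mu>_def card_eq_0_iff)
  have "(\<Sum>i\<in>A. (e i - m)^2) = (\<Sum>i\<in>A. (e i - \<mu>)^2 + 2 * (\<mu> - m) * (e i - \<mu>) + (\<mu> - m)^2)"
    by (rule sum.cong) (auto simp: power2_eq_square algebra_simps)
  also have "\<dots> = (\<Sum>i\<in>A. (e i - \<mu>)^2) + card A * (\<mu> - m)^2"
    using centred by (simp add: sum.distrib flip: sum_distrib_left)
  finally show ?thesis .
qed

lemma coordinate_image_box:
  assumes "z0 \<in> {z. \<forall>i\<in>I. P i (z i)}" and "j \<in> I"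
  shows "(\<lambda>z. z j) ` {z. \<forall>i\<in>I. P i (z i)} = {w. P j w}"
proof (intro equalityI subsetI)
  fix w assume "w \<in> {w. P j w}"
  with assms have "z0(j := w) \<in> {z. \<forall>i\<in>I. P i (z i)}" by auto
  then show "w \<in> (\<lambda>z. z j) ` {z. \<forall>i\<in>I. P i (z i)}" by (rule rev_image_eqI) simp
qed (use assms in auto)

lemma affine_div_convex_quasiconcave:
  fixes g :: "real \<Rightarrow> real"
  assumes conv: "convex_on {x..y} g" and pos: "\<And>w. w \<in> {x..y} \<Longrightarrow> 0 < g w"
    and nonneg: "0 \<le> a * x + b" "0 \<le> a * y + b" and z: "z \<in> {x..y}"
  shows "min ((a * x + b) / g x) ((a * y + b) / g y) \<le> (a * z + b) / g z"
proof (cases "x = y")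
  case True
  with z show ?thesis by simp
next
  case False
  define c where "c = min ((a * x + b) / g x) ((a * y + b) / g y)"
  define s where "s = (z - x) / (y - x)"
  have "x < y" using False z by auto
  then have s: "0 \<le> s" "s \<le> 1" and "s * (y - x) = z - x"
    using z by (auto simp: s_def field_simps)
  then have z_eq: "z = (1 - s) * x + s * y" by (simp add: algebra_simps)
  have x_y: "x \<in> {x..y}" "y \<in> {x..y}" using \<open>x < y\<close> by auto
  have "0 \<le> c" using nonneg pos[OF x_y(1)] pos[OF x_y(2)] by (simp add: c_def)
  have cx: "c * g x \<le> a * x + b" and cy: "c * g y \<le> a * y + b"
    using pos[OF x_y(1)] pos[OF x_y(2)] by (simp_all add: c_def flip: pos_le_divide_eq)
  have "c * g z \<le> c * ((1 - s) * g x + s * g y)"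
    using convex_onD_Icc[OF conv, of s] \<open>x < y\<close> s \<open>0 \<le> c\<close> by (simp add: z_eq mult_left_mono)
  also have "\<dots> = (1 - s) * (c * g x) + s * (c * g y)" by (simp add: algebra_simps)
  also have "\<dots> \<le> (1 - s) * (a * x + b) + s * (a * y + b)"
    using cx cy s by (intro add_mono mult_left_mono) auto
  also have "\<dots> = a * z + b" by (simp add: z_eq algebra_simps)
  finally show ?thesis using pos[OF z] by (simp add: c_def pos_le_divide_eq)
qed

lemma INF_Icc_eq_min_endpoints:
  fixes F :: "real \<Rightarrow> real"
  assumes "a \<le> b" and "\<And>z. z \<in> {a..b} \<Longrightarrow> min (F a) (F b) \<le> F z"
  shows "(INF w\<in>{a..b}. ereal (F w)) = ereal (min (F a) (F b))"
proof (rule antisym)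
  have "(INF w\<in>{a..b}. ereal (F w)) \<le> ereal (F a)" "(INF w\<in>{a..b}. ereal (F w)) \<le> ereal (F b)"
    using assms(1) by (auto intro: INF_lower)
  then show "(INF w\<in>{a..b}. ereal (F w)) \<le> ereal (min (F a) (F b))"
    by (simp add: min_def)
  show "ereal (min (F a) (F b)) \<le> (INF w\<in>{a..b}. ereal (F w))"
  proof (rule INF_greatest)
    fix w assume "w \<in> {a..b}"
    then have "min (F a) (F b) \<le> F w" by (rule assms(2))
    then show "ereal (min (F a) (F b)) \<le> ereal (F w)" by (simp only: ereal_less_eq)
  qed
qed

lemma INF_atLeast_eq_min_limit:
  fixes F :: "real \<Rightarrow> real"
  assumes qc: "\<And>z y. a \<le> z \<Longrightarrow> z \<le> y \<Longrightarrow> min (F a) (F y) \<le> F z"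
    and lim: "(F \<longlongrightarrow> l) at_top"
  shows "(INF w\<in>{a..}. ereal (F w)) = ereal (min (F a) l)"
proof (rule antisym)
  have "(INF w\<in>{a..}. ereal (F w)) \<le> ereal l"
  proof (rule tendsto_lowerbound)
    show "((\<lambda>y. ereal (F y)) \<longlongrightarrow> ereal l) at_top" using lim by simp
    show "\<forall>\<^sub>F y in at_top. (INF w\<in>{a..}. ereal (F w)) \<le> ereal (F y)"
      using eventually_ge_at_top[of a] by eventually_elim (auto intro: INF_lower)
  qed simp
  moreover have "(INF w\<in>{a..}. ereal (F w)) \<le> ereal (F a)" by (rule INF_lower) simp
  ultimately show "(INF w\<in>{a..}. ereal (F w)) \<le> ereal (min (F a) l)"
    by (simp add: min_def)
  have "min (F a) l \<le> F z" if "a \<le> z" for z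
  proof (rule tendsto_upperbound)
    show "((\<lambda>y. min (F a) (F y)) \<longlongrightarrow> min (F a) l) at_top" by (intro tendsto_intros lim)
    show "\<forall>\<^sub>F y in at_top. min (F a) (F y) \<le> F z"
      using eventually_ge_at_top[of z] by eventually_elim (use qc that in blast)
  qed simp
  then show "ereal (min (F a) l) \<le> (INF w\<in>{a..}. ereal (F w))"
    by (intro INF_greatest) (simp only: atLeast_iff ereal_less_eq)
qed

(* The filter F is principal {w0} when the infimum c is attained at w0, and at_left u when it is
   only approached. *)
lemma SUP_divide_eq_of_tendsto_infimum:
  fixes g :: "'a \<Rightarrow> real"
  assumes "0 < c" and "0 \<le> t" and lower: "\<And>w. w \<in> S \<Longrightarrow> c \<le> g w"
    and lim: "(g \<longlongrightarrow> c) F" and "F \<noteq> bot" and in_S: "\<forall>\<^sub>F w in F. w \<in> S"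
  shows "(SUP w\<in>S. ereal (t / g w)) = ereal (t / c)"
proof (rule antisym)
  show "(SUP w\<in>S. ereal (t / g w)) \<le> ereal (t / c)"
  proof (rule SUP_least)
    fix w assume "w \<in> S"
    then have "t / g w \<le> t / c"
      using lower[of w] assms(1,2) by (intro divide_left_mono) auto
    then show "ereal (t / g w) \<le> ereal (t / c)" by simp
  qed
  show "ereal (t / c) \<le> (SUP w\<in>S. ereal (t / g w))"
  proof (rule tendsto_upperbound)
    show "((\<lambda>w. ereal (t / g w)) \<longlongrightarrow> ereal (t / c)) F"
      using lim \<open>0 < c\<close> by (intro tendsto_intros) auto
    show "\<forall>\<^sub>F w in F. ereal (t / g w) \<le> (SUP w\<in>S. ereal (t / g w))"
      using in_S by eventually_elim (rule SUP_upper)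
  qed fact
qed

lemma mu_z_eq_mu_hat: "0 < n \<Longrightarrow> mu_z E n j z = (real n * mu_hat E n j + z) / (real n + 1)"
  by (simp add: mu_z_def mu_hat_def)

lemma sigma_z_eq_sigma_hat:
  assumes "0 < n"
  shows "sigma_z E n j z = sqrt ((sigma_hat E n j)^2 + (z - mu_hat E n j)^2 / (real n + 1))"
proof -
  define \<mu> where "\<mu> = mu_hat E n j"
  define m where "m = mu_z E n j z"
  have "\<mu> = (\<Sum>i=1..n. E i j) / card {1..n}" by (simp add: \<mu>_def mu_hat_def)
  then have deviations: "(\<Sum>i=1..n. (E i j - m)^2) = (\<Sum>i=1..n. (E i j - \<mu>)^2) + n * (\<mu> - m)^2"
    using sum_squares_about_point[where e = "\<lambda>i. E i j" and A = "{1..n}" and m = m] by simp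
  have m_eq: "m = (n * \<mu> + z) / (n + 1)" using assms by (simp add: m_def \<mu>_def mu_z_eq_mu_hat)
  have "n * (\<mu> - m)^2 + (z - m)^2 = n * (z - \<mu>)^2 / (n + 1)"
    unfolding m_eq by (simp add: divide_simps) (simp add: power2_eq_square algebra_simps)
  then show ?thesis
    using assms unfolding sigma_z_def sigma_hat_def m_def[symmetric] \<mu>_def[symmetric] deviations
    by (simp add: sum_nonneg add_divide_distrib add.assoc)
qed

lemma sigma_hat_nonneg: "0 \<le> sigma_hat E n j"
  by (simp add: sigma_hat_def sum_nonneg)

lemma sigma_hat_pos:
  assumes "2 \<le> n" and "inj_on (\<lambda>i. E i j) {1..n}"
  shows "0 < sigma_hat E n j"
proof -
  have "E 1 j \<noteq> E 2 j" using assms unfolding inj_on_def by force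
  then have "(E 1 j - mu_hat E n j)^2 + (E 2 j - mu_hat E n j)^2 > 0"
    by (auto simp: sum_power2_gt_zero_iff)
  also have "\<dots> = (\<Sum>i\<in>{1,2}. (E i j - mu_hat E n j)^2)" by simp
  also have "\<dots> \<le> (\<Sum>i=1..n. (E i j - mu_hat E n j)^2)"
    using assms(1) by (intro sum_mono2) auto
  finally show ?thesis using assms(1) by (simp add: sigma_hat_def)
qed

lemma sigma_z_pos: "2 \<le> n \<Longrightarrow> inj_on (\<lambda>i. E i j) {1..n} \<Longrightarrow> 0 < sigma_z E n j z"
  using sigma_hat_pos[of n E j] by (simp add: sigma_z_eq_sigma_hat add_pos_nonneg)

lemma sigma_z_ge_sigma_hat: "0 < n \<Longrightarrow> sigma_hat E n j \<le> sigma_z E n j z"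
  using sigma_hat_nonneg[of E n j] by (simp add: sigma_z_eq_sigma_hat real_le_rsqrt)

lemma sigma_z_mu_hat: "0 < n \<Longrightarrow> sigma_z E n j (mu_hat E n j) = sigma_hat E n j"
  using sigma_hat_nonneg[of E n j] by (simp add: sigma_z_eq_sigma_hat)

lemma sigma_z_mono_right:
  "0 < n \<Longrightarrow> mu_hat E n j \<le> x \<Longrightarrow> x \<le> y \<Longrightarrow> sigma_z E n j x \<le> sigma_z E n j y"
  by (simp add: sigma_z_eq_sigma_hat divide_right_mono power_mono)

lemma sigma_z_antimono_left:
  "0 < n \<Longrightarrow> y \<le> mu_hat E n j \<Longrightarrow> x \<le> y \<Longrightarrow> sigma_z E n j y \<le> sigma_z E n j x"
  by (simp add: sigma_z_eq_sigma_hat divide_right_mono power_mono power2_commute[of _ "mu_hat E n j"])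

lemma isCont_sigma_z:
  assumes "0 < n"
  shows "isCont (sigma_z E n j) z"
proof -
  have "sigma_z E n j = (\<lambda>z. sqrt ((sigma_hat E n j)^2 + (z - mu_hat E n j)^2 / (real n + 1)))"
    using assms by (simp add: fun_eq_iff sigma_z_eq_sigma_hat)
  then show ?thesis by (simp add: continuous_intros)
qed

lemma sigma_z_as_norm:
  assumes "0 < n"
  shows "sigma_z E n j z = cmod (Complex (sigma_hat E n j) ((z - mu_hat E n j) / sqrt (real n + 1)))"
  using assms by (simp add: sigma_z_eq_sigma_hat cmod_def power_divide)

lemma convex_on_sigma_z:
  assumes "0 < n"
  shows "convex_on UNIV (sigma_z E n j)"
proof (rule convex_onI)
  fix t x y :: real
  assume "0 < t" "t < 1"
  define v where "v = (\<lambda>w. Complex (sigma_hat E n j) ((w - mu_hat E n j) / sqrt (real n + 1)))"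
  have "v ((1 - t) *\<^sub>R x + t *\<^sub>R y) = (1 - t) *\<^sub>R v x + t *\<^sub>R v y"
    by (simp add: v_def complex_eq_iff scaleR_conv_of_real diff_divide_distrib add_divide_distrib algebra_simps)
  then have "sigma_z E n j ((1 - t) *\<^sub>R x + t *\<^sub>R y) = cmod ((1 - t) *\<^sub>R v x + t *\<^sub>R v y)"
    using assms by (simp add: sigma_z_as_norm v_def)
  also have "\<dots> \<le> cmod ((1 - t) *\<^sub>R v x) + cmod (t *\<^sub>R v y)"
    by (rule norm_triangle_ineq)
  also have "\<dots> = (1 - t) * cmod (v x) + t * cmod (v y)"
    using \<open>0 < t\<close> \<open>t < 1\<close> by simp
  finally show "sigma_z E n j ((1 - t) *\<^sub>R x + t *\<^sub>R y) \<le> (1 - t) * sigma_z E n j x + t * sigma_z E n j y"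
    using assms by (simp add: sigma_z_as_norm v_def)
qed simp

lemma mu_z_div_sigma_z_quasiconcave:
  assumes n: "2 \<le> n" and inj: "inj_on (\<lambda>i. E i j) {1..n}" and mu: "0 \<le> mu_hat E n j"
    and "0 \<le> x" and z: "z \<in> {x..y}"
  shows "min (mu_z E n j x / sigma_z E n j x) (mu_z E n j y / sigma_z E n j y)
    \<le> mu_z E n j z / sigma_z E n j z"
proof -
  define a where "a = 1 / (real n + 1)"
  define b where "b = real n * mu_hat E n j / (real n + 1)"
  have affine: "mu_z E n j w = a * w + b" for w
    using n by (simp add: mu_z_eq_mu_hat a_def b_def add_divide_distrib)
  have "0 \<le> a * w + b" if "0 \<le> w" for w
    using that mu by (simp add: a_def b_def)
  then show ?thesis
    unfolding affine using z \<open>0 \<le> x\<close> n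
    by (intro affine_div_convex_quasiconcave sigma_z_pos[of n E j, OF n inj]
        convex_on_subset[OF convex_on_sigma_z]) auto
qed

lemma isCont_mu_z_div_sigma_z:
  assumes "2 \<le> n" and "inj_on (\<lambda>i. E i j) {1..n}"
  shows "isCont (\<lambda>z. mu_z E n j z / sigma_z E n j z) z"
proof -
  have "isCont (mu_z E n j) z" by (simp add: mu_z_def[abs_def])
  then show ?thesis
    using assms sigma_z_pos[of n E j z, OF assms] by (intro continuous_intros isCont_sigma_z) auto
qed

lemma mu_z_div_sigma_z_tendsto_at_top:
  assumes n: "2 \<le> n" and inj: "inj_on (\<lambda>i. E i j) {1..n}"
  shows "((\<lambda>z. mu_z E n j z / sigma_z E n j z) \<longlongrightarrow> 1 / sqrt (real n + 1)) at_top"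
proof -
  define m where "m = mu_hat E n j"
  define a where "a = (sigma_hat E n j)^2"
  define N where "N = real n"
  have "a > 0" using sigma_hat_pos[of n E j, OF n inj] by (simp add: a_def)
  have "N > 0" using n by (simp add: N_def)
  have "((\<lambda>z. ((N * m + z) / (N + 1)) / sqrt (a + (z - m)^2 / (N + 1))) \<longlongrightarrow>
      inverse (N + 1) * inverse (inverse (N + 1) powr (1 / 2))) at_top"
    using \<open>a > 0\<close> \<open>N > 0\<close> by real_asymp
  also have "inverse (N + 1) * inverse (inverse (N + 1) powr (1 / 2)) = 1 / sqrt (N + 1)"
    using \<open>N > 0\<close> by (simp add: powr_half_sqrt real_sqrt_divide field_simps)
  finally show ?thesis using n by (simp add: mu_z_eq_mu_hat sigma_z_eq_sigma_hat m_def a_def N_def)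
qed

lemma INF_mu_z_div_sigma_z:
  assumes n: "2 \<le> n" and inj: "inj_on (\<lambda>i. E i j) {1..n}" and mu: "0 \<le> mu_hat E n j"
    and "0 \<le> \<omega>"
  defines "F \<equiv> \<lambda>z. mu_z E n j z / sigma_z E n j z"
  shows "(INF w\<in>{w. 0 \<le> w \<and> ereal w \<le> \<omega>}. ereal (F w)) = ereal (min (F 0)
      (if \<omega> = \<infinity> then Lim at_top F else Lim (at_left (real_of_ereal \<omega>)) F))"
proof (cases \<omega>)
  case (real r)
  have "(F \<longlongrightarrow> F r) (at_left r)"
    using isCont_mu_z_div_sigma_z[of n E j r, OF n inj]
    unfolding F_def isCont_def filterlim_at_split by simp
  then have "Lim (at_left r) F = F r" by (simp add: tendsto_Lim)
  moreover have "{w. 0 \<le> w \<and> ereal w \<le> \<omega>} = {0..r}" using real by auto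
  moreover have "(INF w\<in>{0..r}. ereal (F w)) = ereal (min (F 0) (F r))"
    using real \<open>0 \<le> \<omega>\<close> mu_z_div_sigma_z_quasiconcave[OF n inj mu, of 0 _ r]
    by (intro INF_Icc_eq_min_endpoints) (auto simp: F_def)
  ultimately show ?thesis using real by simp
next
  case PInf
  have lim: "(F \<longlongrightarrow> 1 / sqrt (real n + 1)) at_top"
    unfolding F_def by (rule mu_z_div_sigma_z_tendsto_at_top[of n E j, OF n inj])
  moreover have "{w. 0 \<le> w \<and> ereal w \<le> \<omega>} = {0..}" using PInf by auto
  moreover have "(INF w\<in>{0..}. ereal (F w)) = ereal (min (F 0) (1 / sqrt (real n + 1)))"
    using mu_z_div_sigma_z_quasiconcave[OF n inj mu, of 0] lim
    by (intro INF_atLeast_eq_min_limit) (auto simp: F_def)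
  ultimately show ?thesis using PInf by (simp add: tendsto_Lim)
next
  case MInf
  with \<open>0 \<le> \<omega>\<close> show ?thesis by simp
qed

lemma omega_nonneg:
  assumes "0 \<le> mu_hat E n j"
  shows "0 \<le> omega E n j c"
proof -
  define N where "N = real n"
  define s where "s = sqrt (N + 1)"
  consider "c \<le> ereal (- (N / s))" | "ereal (N / s) \<le> c"
    | x where "c = ereal x" "- (N / s) < x" "x < N / s"
    by (cases c) force+
  then show ?thesis
  proof cases
    case 3
    have "0 < s" by (simp add: s_def N_def add_pos_nonneg)
    moreover have "\<bar>x\<bar> < N / s" using 3 by (simp add: abs_less_iff)
    ultimately have "0 \<le> \<bar>x\<bar> * s" "\<bar>x\<bar> * s < N" by (simp_all add: pos_less_divide_eq)
    then have "(\<bar>x\<bar> * s)^2 < N^2" by (simp add: power_strict_mono)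
    then have "x^2 * (N + 1) < N^2" by (simp add: s_def N_def power_mult_distrib)
    then have "0 \<le> \<bar>x\<bar> * sqrt ((N + 1)^2 / (N^2 - (N + 1) * x^2))"
      by (simp add: mult.commute)
    with 3 assms sigma_hat_nonneg[of E n j] show ?thesis
      by (simp add: omega_def Let_def N_def[symmetric] s_def[symmetric] le_max_iff_disj
          flip: zero_ereal_def)
  qed (auto simp: omega_def N_def s_def)
qed

lemma INF_E_gwc_mu_z_div_sigma_z:
  assumes n: "2 \<le> n" and inj: "inj_on (\<lambda>i. E i j) {1..n}" and mu: "0 \<le> mu_hat E n j"
    and j: "j \<in> {1..d}" and \<omega>: "\<forall>i\<in>{1..d}. 0 \<le> omegaQ E n d alpha i"
  shows "(INF z\<in>E_gwc E n d alpha. ereal (mu_z E n j (z j) / sigma_z E n j (z j)))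
    = ereal (min (mu_z E n j 0 / sigma_z E n j 0) (ratio_lim E n d alpha j))"
proof -
  let ?P = "\<lambda>i w. 0 \<le> w \<and> ereal w \<le> omegaQ E n d alpha i"
  have box: "E_gwc E n d alpha = {z. \<forall>i\<in>{1..d}. ?P i (z i)}" by (simp add: E_gwc_def)
  have "(\<lambda>_. 0) \<in> E_gwc E n d alpha" using \<omega> by (simp add: E_gwc_def flip: zero_ereal_def)
  then have image: "(\<lambda>z. z j) ` E_gwc E n d alpha = {w. ?P j w}"
    unfolding box using j by (rule coordinate_image_box)
  have "(INF z\<in>E_gwc E n d alpha. ereal (mu_z E n j (z j) / sigma_z E n j (z j)))
      = (INF w\<in>{w. ?P j w}. ereal (mu_z E n j w / sigma_z E n j w))"
    unfolding image[symmetric] image_image ..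
  also have "\<dots> = ereal (min (mu_z E n j 0 / sigma_z E n j 0) (ratio_lim E n d alpha j))"
    unfolding ratio_lim_def using \<omega> j by (intro INF_mu_z_div_sigma_z[OF n inj mu]) simp
  finally show ?thesis .
qed

lemma SUP_interval_div_sigma_z:
  assumes n: "2 \<le> n" and inj: "inj_on (\<lambda>i. E i j) {1..n}" and "0 \<le> t" and "ereal a < U"
  shows "(SUP w\<in>{w. ereal a \<le> ereal w \<and> ereal w < U}. ereal (t / sigma_z E n j w))
    = ereal t / (if ereal a \<le> ereal (mu_hat E n j) \<and> ereal (mu_hat E n j) < U
                 then ereal (sigma_hat E n j)
                 else min (sigma_ext E n j (ereal a)) (sigma_ext E n j U))"
    (is "?sup = ereal t / ?r")
proof -
  define g where "g = sigma_z E n j"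
  define m where "m = mu_hat E n j"
  define S where "S = {w. ereal a \<le> ereal w \<and> ereal w < U}"
  have "0 < n" using n by simp
  have g_pos: "0 < g w" for w unfolding g_def by (rule sigma_z_pos[of n E j w, OF n inj])
  have sup_eq: "?sup = ereal t / ?r" if "?r = ereal c" "0 < c" "\<And>w. w \<in> S \<Longrightarrow> c \<le> g w"
    "(g \<longlongrightarrow> c) F" "F \<noteq> bot" "\<forall>\<^sub>F w in F. w \<in> S" for c F
    using SUP_divide_eq_of_tendsto_infimum[OF that(2) \<open>0 \<le> t\<close> that(3-6)] that(1,2)
    by (simp add: S_def g_def)
  consider (inside) "ereal a \<le> ereal m \<and> ereal m < U" | (left) "m < a"
    | (right) u where "U = ereal u" "a < u" "u \<le> m"
    using \<open>ereal a < U\<close> by (cases U) force+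
  then show ?thesis
  proof cases
    case inside
    have "(g \<longlongrightarrow> sigma_hat E n j) (principal {m})"
      using tendsto_principal_singleton[of g m] sigma_z_mu_hat[OF \<open>0 < n\<close>] by (simp add: g_def m_def)
    then show ?thesis
      using inside sigma_hat_pos[of n E j, OF n inj] sigma_z_ge_sigma_hat[OF \<open>0 < n\<close>]
      by (intro sup_eq[where F = "principal {m}"])
        (auto simp: S_def g_def m_def eventually_principal principal_eq_bot_iff)
  next
    case left
    have "min (sigma_ext E n j (ereal a)) (sigma_ext E n j U) = ereal (g a)"
    proof (cases U)
      case (real u)
      then have "g a \<le> g u"
        using left \<open>ereal a < U\<close> \<open>0 < n\<close> unfolding g_def m_def by (intro sigma_z_mono_right) auto
      then show ?thesis using real by (simp add: sigma_ext_def g_def)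
    qed (use \<open>ereal a < U\<close> in \<open>auto simp: sigma_ext_def g_def\<close>)
    then show ?thesis
      using left g_pos \<open>ereal a < U\<close> \<open>0 < n\<close>
      by (intro sup_eq[where F = "principal {a}"])
        (auto simp: S_def g_def m_def eventually_principal principal_eq_bot_iff
          intro: sigma_z_mono_right)
  next
    case right
    have "g u \<le> g a" using right \<open>0 < n\<close> unfolding g_def m_def by (intro sigma_z_antimono_left) auto
    then have "min (sigma_ext E n j (ereal a)) (sigma_ext E n j U) = ereal (g u)"
      using right by (simp add: sigma_ext_def g_def)
    moreover have "(g \<longlongrightarrow> g u) (at_left u)"
      using isCont_sigma_z[OF \<open>0 < n\<close>] unfolding g_def isCont_def filterlim_at_split by simp
    moreover have "\<forall>\<^sub>F w in at_left u. w \<in> S"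
      using eventually_at_left_real[OF \<open>a < u\<close>] by eventually_elim (simp add: S_def right)
    ultimately show ?thesis
      using right g_pos \<open>0 < n\<close>
      by (intro sup_eq[where F = "at_left u"])
        (auto simp: S_def g_def m_def intro: sigma_z_antimono_left)
  qed
qed

lemma SUP_Rcell_div_sigma_z:
  assumes n: "2 \<le> n" and inj: "inj_on (\<lambda>i. E i j) {1..n}" and "0 \<le> t"
    and j: "j \<in> {1..d}" and "h j \<le> n + 1" and z0: "z0 \<in> Rcell E n d alpha h"
  shows "(SUP z\<in>Rcell E n d alpha h. ereal (t / sigma_z E n j (z j)))
    = ereal t / r_fun E n d alpha j (h j)"
proof -
  let ?P = "\<lambda>i w. Eord E n i (h i - 1) \<le> ereal w \<and> ereal w < Ucell E n d alpha i (h i)"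
  have box: "Rcell E n d alpha h = {z. \<forall>i\<in>{1..d}. ?P i (z i)}" by (simp add: Rcell_def)
  have image: "(\<lambda>z. z j) ` Rcell E n d alpha h = {w. ?P j w}"
    using z0 unfolding box using j by (rule coordinate_image_box)
  have "\<bar>Eord E n j (h j - 1)\<bar> \<noteq> \<infinity>" using \<open>h j \<le> n + 1\<close> by (auto simp: Eord_def)
  then obtain a where a: "Eord E n j (h j - 1) = ereal a" by (metis ereal_real')
  have "?P j (z0 j)" using z0 j unfolding box by blast
  then have "ereal a < Ucell E n d alpha j (h j)" unfolding a by (blast intro: order.strict_trans1)
  then have "(SUP w\<in>{w. ?P j w}. ereal (t / sigma_z E n j w)) = ereal t / r_fun E n d alpha j (h j)"
    unfolding a r_fun_def by (rule SUP_interval_div_sigma_z[of n E j, OF n inj \<open>0 \<le> t\<close>])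
  then show ?thesis unfolding image[symmetric] image_image .
qed

theorem lemma3p6:
  fixes n d :: nat and alpha :: real
    and E :: "nat \<Rightarrow> nat \<Rightarrow> real"
    and Res :: "'x \<Rightarrow> (nat \<Rightarrow> real) \<Rightarrow> (nat \<Rightarrow> real)" and X :: 'x
    and h :: "nat \<Rightarrow> nat" and t :: "nat \<Rightarrow> real"
  assumes "n \<ge> 2" and "d \<ge> 1" and "0 < alpha" and "alpha < 1"
    and "\<forall>i\<in>{1..n}. \<forall>j\<in>{1..d}. 0 \<le> E i j"
    and "\<forall>j\<in>{1..d}. inj_on (\<lambda>i. E i j) {1..n}"
    and "\<forall>j\<in>{1..d}. 1 \<le> h j \<and> h j \<le> n + 1"
    and "Ycell E n d alpha Res X h \<noteq> {}"
    and "\<forall>j\<in>{1..d}. 0 \<le> t j"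
  shows "Phi_lwc E n d alpha t h =
    Max ((\<lambda>j. ereal (t j) / r_fun E n d alpha j (h j)
        - ereal (min (mu_z E n j 0 / sigma_z E n j 0) (ratio_lim E n d alpha j))) ` {1..d})"
proof -
  note n = assms(1) and inj = assms(6) and h = assms(7) and t = assms(9)
  obtain y where "y \<in> Ycell E n d alpha Res X h" using assms(8) by blast
  then have z0: "Res X y \<in> Rcell E n d alpha h" by (simp add: Ycell_def)
  have mu: "0 \<le> mu_hat E n j" if "j \<in> {1..d}" for j
    using assms(5) that by (auto simp: mu_hat_def intro!: sum_nonneg divide_nonneg_nonneg)
  then have \<omega>: "\<forall>i\<in>{1..d}. 0 \<le> omegaQ E n d alpha i" by (simp add: omegaQ_def omega_nonneg)
  have "(SUP z\<in>Rcell E n d alpha h. ereal (t j / sigma_z E n j (z j)))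
      - (INF z\<in>E_gwc E n d alpha. ereal (mu_z E n j (z j) / sigma_z E n j (z j)))
    = ereal (t j) / r_fun E n d alpha j (h j)
      - ereal (min (mu_z E n j 0 / sigma_z E n j 0) (ratio_lim E n d alpha j))"
    if j: "j \<in> {1..d}" for j
    using SUP_Rcell_div_sigma_z[OF n _ _ j _ z0] INF_E_gwc_mu_z_div_sigma_z[OF n _ mu[OF j] j \<omega>]
      inj h t j by simp
  then show ?thesis unfolding Phi_lwc_def by (intro arg_cong[where f = Max] image_cong) auto
qed

end
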